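(* Let $n\in\mathbb{N}$ and $t\in\mathbb{R}\setminus\{0\}$. Define $\phi_n(t)=\left[\frac{t^n}{n!},\dots,\frac{t^2}{2!},t\right]^\top$, $\psi_n(t)=\left[t,\frac{t^2}{2!},\dots,\frac{t^n}{n!}\right]^\top\in\mathbb{R}^n$, let $P_n\in\mathbb{R}^{n\times n}$ be the anti-diagonal matrix whose $(i,n+1-i)$ entry is $(-1)^i$ ($i=1,\dots,n$) and all other entries zero, let $\Gamma_{n+1}^{2n}(t)\in\mathbb{R}^{n\times n}$ have $(i,j)$ entry $\frac{t^{\,n+1-i+j}}{(n+1-i+j)!}$, and set $\widehat\Gamma_{n+1}^{2n}(t)=\Gamma_{n+1}^{2n}(t)P_n$, $\widehat\psi_n(t)^H=\psi_n(t)^HP_n$. Then $$\kappa_n:=\widehat\psi_n(t)^H\big(\widehat\Gamma_{n+1}^{2n}(t)\big)^{-1}\phi_n(t)=\begin{cases}0,& n\text{ even},\\2,& n\text{ odd}.\end{cases}$$ *)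

theory Defs
  imports "Jordan_Normal_Form.Matrix"
begin

(* Indices are 0-based here; paper index i (1-based) corresponds to i-1. *)

definition phi_vec :: "nat \<Rightarrow> real \<Rightarrow> real vec" where
  "phi_vec n t = vec n (\<lambda>i. t ^ (n - i) / fact (n - i))"

definition psi_vec :: "nat \<Rightarrow> real \<Rightarrow> real vec" where
  "psi_vec n t = vec n (\<lambda>i. t ^ (i + 1) / fact (i + 1))"

definition P_mat :: "nat \<Rightarrow> real mat" where
  "P_mat n = mat n n (\<lambda>(i, j). if j = n - 1 - i then (-1) ^ (i + 1) else 0)"

definition Gamma_mat :: "nat \<Rightarrow> real \<Rightarrow> real mat" where
  "Gamma_mat n t = mat n n (\<lambda>(i, j). t ^ (n + 1 - i + j) / fact (n + 1 - i + j))"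

definition Gamma_hat :: "nat \<Rightarrow> real \<Rightarrow> real mat" where
  "Gamma_hat n t = Gamma_mat n t * P_mat n"

(* psi_hat^H = psi^H P_n, as a vector (real case: H = transpose) *)
definition psi_hat :: "nat \<Rightarrow> real \<Rightarrow> real vec" where
  "psi_hat n t = transpose_mat (P_mat n) *\<^sub>v psi_vec n t"

end

theory Submission
  imports Defs "HOL-Computational_Algebra.Polynomial" "Jordan_Normal_Form.Determinant"
begin

text \<open>
  For \<open>y \<in> \<real>\<^sup>n\<close> let \<open>g\<^sub>y(x) = \<Sum>\<^sub>j y\<^sub>j x\<^bsup>n+1+j\<^esup> / (n+1+j)!\<close>. The \<open>i\<close>-th entry of
  \<open>\<Gamma> y\<close> is \<open>g\<^sub>y\<^bsup>(i)\<^esup>(t)\<close>, the \<open>i\<close>-th entry of \<open>\<phi>\<close> is the \<open>i\<close>-th derivative of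
  \<open>x\<^sup>n / n!\<close> at \<open>t\<close>, and \<open>\<psi> \<bullet> y = g\<^sub>y\<^bsup>(n)\<^esup>(t)\<close>. So if \<open>\<Gamma> y = d \<phi>\<close>, then
  \<open>h = g\<^sub>y - d x\<^sup>n / n!\<close> has degree at most \<open>2n\<close> and vanishes to order \<open>n\<close> at \<open>t\<close> and
  at \<open>0\<close>, hence \<open>h = c x\<^sup>n (x - t)\<^sup>n\<close>, and the coefficient of \<open>x\<^sup>n\<close> gives
  \<open>c (-t)\<^sup>n = -d / n!\<close>. For \<open>d = 0\<close> this forces \<open>y = 0\<close>, so \<open>\<Gamma>\<close> is invertible;
  for \<open>d = 1\<close>, differentiating \<open>n\<close> times at \<open>t\<close> gives
  \<open>\<psi> \<bullet> y = 1 + n! c t\<^sup>n = 1 - (-1)\<^sup>n\<close>. The signed permutation \<open>P\<close> only relabels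
  the unknowns: \<open>\<psi>\<^sup>H P (\<Gamma> P)\<^sup>-\<^sup>1 \<phi> = \<psi> \<bullet> y\<close> with \<open>\<Gamma> y = \<phi>\<close>.
\<close>

lemma higher_pderiv_monom_fact:
  fixes c :: "'a :: field_char_0"
  assumes "i \<le> k"
  shows "(pderiv ^^ i) (monom c k) = monom (c * fact k / fact (k - i)) (k - i)"
  using assms
proof (induction i)
  case 0
  then show ?case by simp
next
  case (Suc i)
  have k: "k - i = Suc (k - Suc i)"
    using Suc.prems by simp
  have "(pderiv ^^ Suc i) (monom c k) = pderiv (monom (c * fact k / fact (k - i)) (k - i))"
    using Suc by simp
  also have "\<dots> = monom (of_nat (k - i) * (c * fact k / fact (k - i))) (k - Suc i)"
    by (simp add: pderiv_monom)
  also have "of_nat (k - i) * (c * fact k / fact (k - i)) = (c * fact k / fact (k - Suc i) :: 'a)"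
    unfolding k fact_Suc of_nat_mult by (simp del: of_nat_Suc)
  finally show ?case .
qed

lemma higher_pderiv_diff:
  fixes p q :: "'a :: idom poly"
  shows "(pderiv ^^ n) (p - q) = (pderiv ^^ n) p - (pderiv ^^ n) q"
  by (induction n arbitrary: p q) (simp_all del: funpow.simps add: funpow_Suc_right pderiv_diff)

lemma linear_power_dvd_if_higher_pderiv_vanish:
  fixes p :: "'a :: {idom, semiring_char_0} poly"
  assumes "\<And>i. i < m \<Longrightarrow> poly ((pderiv ^^ i) p) a = 0"
  shows "[:-a, 1:] ^ m dvd p"
  using assms
proof (induction m arbitrary: p)
  case 0
  then show ?case by simp
next
  case (Suc m)
  have root: "poly p a = 0"
    using Suc.prems[of 0] by simp
  have "[:-a, 1:] ^ m dvd pderiv p"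
  proof (rule Suc.IH)
    show "poly ((pderiv ^^ i) (pderiv p)) a = 0" if "i < m" for i
      using Suc.prems[of "Suc i"] that by (simp add: funpow_Suc_right del: funpow.simps)
  qed
  then have order_pderiv_ge: "pderiv p = 0 \<or> m \<le> order a (pderiv p)"
    by (simp add: order_divides)
  show ?case
  proof (cases "p = 0 \<or> pderiv p = 0")
    case True
    then show ?thesis
      using root by (auto elim!: pderiv_iszero[THEN exE])
  next
    case False
    then have "Suc m \<le> order a p"
      using order_pderiv[of p a] root order_pderiv_ge by simp
    then show ?thesis
      using order_divides[of a "Suc m" p] by blast
  qed
qed

lemma poly_higher_pderiv_mult_linear_power:
  fixes q :: "'a :: {idom, semiring_char_0} poly"
  shows "poly ((pderiv ^^ k) (q * [:-a, 1:] ^ k)) a = fact k * poly q a"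
proof (induction k arbitrary: q)
  case 0
  then show ?case by simp
next
  case (Suc k)
  have "pderiv (q * [:-a, 1:] ^ Suc k)
      = pderiv q * [:-a, 1:] ^ Suc k + q * smult (of_nat (Suc k)) ([:-a, 1:] ^ k)"
    by (simp add: pderiv_mult pderiv_power_Suc pderiv_pCons del: power_Suc)
  also have "\<dots> = (pderiv q * [:-a, 1:] + smult (of_nat (Suc k)) q) * [:-a, 1:] ^ k"
    by (simp add: algebra_simps)
  finally have "pderiv (q * [:-a, 1:] ^ Suc k)
      = (pderiv q * [:-a, 1:] + smult (of_nat (Suc k)) q) * [:-a, 1:] ^ k" .
  then have "poly ((pderiv ^^ Suc k) (q * [:-a, 1:] ^ Suc k)) a
      = fact k * poly (pderiv q * [:-a, 1:] + smult (of_nat (Suc k)) q) a"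
    using Suc.IH by (simp add: funpow_Suc_right del: funpow.simps)
  also have "\<dots> = fact (Suc k) * poly q a"
    by (simp add: algebra_simps del: of_nat_Suc)
  finally show ?case .
qed

lemma linear_powers_mult_dvd:
  fixes p :: "'a :: idom poly"
  assumes "[:-a, 1:] ^ m dvd p" "[:-b, 1:] ^ k dvd p" "a \<noteq> b"
  shows "[:-a, 1:] ^ m * [:-b, 1:] ^ k dvd p"
proof (cases "p = 0")
  case True
  then show ?thesis by simp
next
  case False
  obtain q where q: "p = [:-a, 1:] ^ m * q"
    using assms(1) by blast
  have "order b ([:-a, 1:] ^ m) = 0"
    using order_root[of "[:-a, 1:] ^ m" b] assms(3) by simp
  then have "order b q = order b p"
    using q order_mult[of "[:-a, 1:] ^ m" q b] False by simp
  then have "[:-b, 1:] ^ k dvd q"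
    using assms(2) False q by (simp add: order_divides)
  then show ?thesis
    using q by simp
qed

lemma eq_smult_linear_powers_if_dvd:
  fixes p :: "'a :: idom poly"
  assumes "[:-a, 1:] ^ m dvd p" "[:-b, 1:] ^ k dvd p" "a \<noteq> b" "degree p \<le> m + k"
  obtains c where "p = smult c ([:-a, 1:] ^ m * [:-b, 1:] ^ k)"
proof (cases "p = 0")
  case True
  then show ?thesis
    using that[of 0] by simp
next
  case False
  obtain q where q: "p = [:-a, 1:] ^ m * [:-b, 1:] ^ k * q"
    using linear_powers_mult_dvd[OF assms(1-3)] by blast
  with False have "degree p = m + k + degree q"
    by (simp add: degree_mult_eq degree_linear_power)
  with assms(4) have "degree q = 0"
    by simp
  then obtain c where "q = [:c:]"
    using degree_0_id by metis
  then show ?thesis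
    using that[of c] q by simp
qed

definition Gamma_poly :: "nat \<Rightarrow> real vec \<Rightarrow> real poly" where
  "Gamma_poly n y = (\<Sum>j<n. monom (y $ j / fact (n + 1 + j)) (n + 1 + j))"

lemma poly_higher_pderiv_Gamma_poly:
  assumes "i \<le> n + 1"
  shows "poly ((pderiv ^^ i) (Gamma_poly n y)) t
    = (\<Sum>j<n. y $ j * t ^ (n + 1 + j - i) / fact (n + 1 + j - i))"
  unfolding Gamma_poly_def higher_pderiv_sum poly_sum
  using assms by (intro sum.cong refl) (simp add: higher_pderiv_monom_fact poly_monom)

lemma Gamma_mat_mult_vec_nth:
  assumes "y \<in> carrier_vec n" "i < n"
  shows "(Gamma_mat n t *\<^sub>v y) $ i = poly ((pderiv ^^ i) (Gamma_poly n y)) t"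
proof -
  have "n + 1 - i + j = n + 1 + j - i" for j
    using assms(2) by simp
  then show ?thesis
    using assms by (simp add: poly_higher_pderiv_Gamma_poly Gamma_mat_def mult_mat_vec_def
        scalar_prod_def lessThan_atLeast0 mult_ac)
qed

lemma psi_vec_scalar_prod:
  assumes "y \<in> carrier_vec n"
  shows "psi_vec n t \<bullet> y = poly ((pderiv ^^ n) (Gamma_poly n y)) t"
  using assms by (simp add: poly_higher_pderiv_Gamma_poly psi_vec_def scalar_prod_def
      lessThan_atLeast0 mult_ac)

lemma coeff_Gamma_poly:
  "coeff (Gamma_poly n y) k = (if n < k \<and> k \<le> 2 * n then y $ (k - Suc n) / fact k else 0)"
proof -
  have "coeff (Gamma_poly n y) k
      = (\<Sum>j<n. if j = k - Suc n \<and> n < k then y $ (k - Suc n) / fact k else 0)"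
    unfolding Gamma_poly_def coeff_sum coeff_monom by (intro sum.cong) auto
  also have "\<dots> = (if n < k \<and> k \<le> 2 * n then y $ (k - Suc n) / fact k else 0)"
    by (cases "n < k") auto
  finally show ?thesis .
qed

lemma degree_Gamma_poly: "degree (Gamma_poly n y) \<le> 2 * n"
  by (rule degree_le) (simp add: coeff_Gamma_poly)

lemma Gamma_poly_eq_monom_mult:
  "Gamma_poly n y = monom 1 (n + 1) * (\<Sum>j<n. monom (y $ j / fact (n + 1 + j)) j)"
  unfolding Gamma_poly_def sum_distrib_left mult_monom by simp

lemma Gamma_poly_minus_monom_eq:
  assumes t: "t \<noteq> 0" and y: "y \<in> carrier_vec n"
    and Gamma: "Gamma_mat n t *\<^sub>v y = d \<cdot>\<^sub>v phi_vec n t"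
  shows "Gamma_poly n y - monom (d / fact n) n
      = smult (- d / (fact n * (-t) ^ n)) (monom 1 n * [:-t, 1:] ^ n)"
proof -
  define h where "h = Gamma_poly n y - monom (d / fact n) n"
  have xn: "[:-0, 1:] ^ n = (monom 1 n :: real poly)"
    by (simp add: monom_altdef)
  have "[:-t, 1:] ^ n dvd h"
  proof (rule linear_power_dvd_if_higher_pderiv_vanish)
    fix i assume i: "i < n"
    have "poly ((pderiv ^^ i) h) t
        = (Gamma_mat n t *\<^sub>v y) $ i - d * t ^ (n - i) / fact (n - i)"
      using i by (simp add: h_def higher_pderiv_diff Gamma_mat_mult_vec_nth[OF y i]
          higher_pderiv_monom_fact poly_monom)
    then show "poly ((pderiv ^^ i) h) t = 0"
      using i by (simp add: Gamma phi_vec_def)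
  qed
  moreover have "[:-0, 1:] ^ n dvd h"
  proof -
    obtain r where "Gamma_poly n y = monom 1 (n + 1) * r"
      using Gamma_poly_eq_monom_mult by blast
    then have "h = monom 1 n * (monom 1 1 * r - [:d / fact n:])"
      by (simp add: h_def algebra_simps mult_monom monom_altdef)
    then show ?thesis
      unfolding xn by (metis dvd_triv_left)
  qed
  moreover have "degree h \<le> n + n"
    using degree_diff_le[OF degree_Gamma_poly[of n y], of "monom (d / fact n) n"]
      degree_monom_le[of "d / fact n" n]
    by (simp add: h_def)
  ultimately obtain c where c: "h = smult c ([:-0, 1:] ^ n * [:-t, 1:] ^ n)"
    using eq_smult_linear_powers_if_dvd t by metis
  have "- d / fact n = coeff h n"
    by (simp add: h_def coeff_Gamma_poly)
  also have "\<dots> = c * (-t) ^ n"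
    unfolding c xn by (simp add: coeff_monom_mult flip: poly_0_coeff_0)
  finally have "c = - d / (fact n * (-t) ^ n)"
    using t by (simp add: field_simps)
  then show ?thesis
    using c unfolding h_def xn by simp
qed

lemma Gamma_mat_mult_vec_eq_zero_imp:
  assumes t: "t \<noteq> 0" and y: "y \<in> carrier_vec n"
    and Gamma: "Gamma_mat n t *\<^sub>v y = 0\<^sub>v n"
  shows "y = 0\<^sub>v n"
proof (rule eq_vecI)
  have "Gamma_mat n t *\<^sub>v y = 0 \<cdot>\<^sub>v phi_vec n t"
    using Gamma by (auto simp: phi_vec_def)
  from Gamma_poly_minus_monom_eq[OF t y this] have "Gamma_poly n y = 0"
    by simp
  then have "y $ j / fact (n + 1 + j) = 0" if "j < n" for j
    using that coeff_Gamma_poly[of n y "n + 1 + j"] by simp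
  then show "y $ j = 0\<^sub>v n $ j" if "j < dim_vec (0\<^sub>v n)" for j
    using that by simp
qed (use y in simp)

lemma psi_vec_scalar_prod_if_Gamma_mat_mult_eq_phi_vec:
  assumes t: "t \<noteq> 0" and y: "y \<in> carrier_vec n"
    and Gamma: "Gamma_mat n t *\<^sub>v y = phi_vec n t"
  shows "psi_vec n t \<bullet> y = 1 - (-1) ^ n"
proof -
  define c where "c = (- 1 / (fact n * (-t) ^ n) :: real)"
  have "Gamma_mat n t *\<^sub>v y = 1 \<cdot>\<^sub>v phi_vec n t"
    using Gamma by simp
  then have "Gamma_poly n y = monom (1 / fact n) n + smult c (monom 1 n * [:-t, 1:] ^ n)"
    using Gamma_poly_minus_monom_eq[OF t y] unfolding c_def by (simp add: diff_eq_eq)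
  moreover have "poly ((pderiv ^^ n) (monom (1 / fact n) n)) t = 1"
    by (simp add: higher_pderiv_monom_fact)
  moreover have "poly ((pderiv ^^ n) (monom 1 n * [:-t, 1:] ^ n)) t = fact n * t ^ n"
    by (simp only: poly_higher_pderiv_mult_linear_power poly_monom mult_1)
  ultimately have "psi_vec n t \<bullet> y = 1 + c * (fact n * t ^ n)"
    by (simp only: psi_vec_scalar_prod[OF y] higher_pderiv_add higher_pderiv_smult
        poly_add poly_smult)
  also have "c * (fact n * t ^ n) = - ((-1) ^ n)"
  proof -
    have "(-t) ^ n = (-1) ^ n * t ^ n"
      by (rule power_minus)
    then show ?thesis
      using t by (cases "even n") (simp_all add: c_def)
  qed
  finally show ?thesis
    by simp
qed

lemma P_mat_mult_vec_nth:
  assumes "v \<in> carrier_vec n" "i < n"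
  shows "(P_mat n *\<^sub>v v) $ i = (-1) ^ (i + 1) * v $ (n - 1 - i)"
proof -
  have "(P_mat n *\<^sub>v v) $ i
      = (\<Sum>j<n. (if j = n - 1 - i then (-1) ^ (i + 1) else 0) * v $ j)"
    using assms by (simp add: P_mat_def mult_mat_vec_def scalar_prod_def lessThan_atLeast0)
  also have "\<dots> = (\<Sum>j<n. if j = n - 1 - i then (-1) ^ (i + 1) * v $ j else 0)"
    by (intro sum.cong) auto
  finally show ?thesis
    using assms(2) by simp
qed

lemma P_mat_mult_vec_eq_zero_imp:
  assumes v: "v \<in> carrier_vec n" and P: "P_mat n *\<^sub>v v = 0\<^sub>v n"
  shows "v = 0\<^sub>v n"
proof (rule eq_vecI)
  fix j assume "j < dim_vec (0\<^sub>v n :: real vec)"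
  then have j: "j < n" "n - 1 - (n - 1 - j) = j"
    by auto
  then have "(-1) ^ (n - 1 - j + 1) * v $ j = (0 :: real)"
    using P_mat_mult_vec_nth[OF v, of "n - 1 - j"] P by simp
  then show "v $ j = 0\<^sub>v n $ j"
    using j by simp
qed (use v in simp)

lemma invertible_mat_if_kernel_trivial:
  fixes A :: "'a :: field mat"
  assumes A: "A \<in> carrier_mat n n"
    and kernel: "\<And>v. v \<in> carrier_vec n \<Longrightarrow> A *\<^sub>v v = 0\<^sub>v n \<Longrightarrow> v = 0\<^sub>v n"
  shows "invertible_mat A"
proof -
  have "det A \<noteq> 0"
    using kernel by (auto simp: det_0_iff_vec_prod_zero[OF A])
  from det_non_zero_imp_unit[OF A this, of "()"]
  obtain B where "B \<in> carrier_mat n n" "B * A = 1\<^sub>m n" "A * B = 1\<^sub>m n"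
    unfolding Units_def by (auto simp: ring_mat_simps)
  then show ?thesis
    using A unfolding invertible_mat_def inverts_mat_def by auto
qed

lemma P_mat_carrier: "P_mat n \<in> carrier_mat n n"
  by (simp add: P_mat_def)

lemma Gamma_mat_carrier: "Gamma_mat n t \<in> carrier_mat n n"
  by (simp add: Gamma_mat_def)

lemma invertible_Gamma_hat:
  assumes "t \<noteq> 0"
  shows "invertible_mat (Gamma_hat n t)"
proof (rule invertible_mat_if_kernel_trivial)
  show "Gamma_hat n t \<in> carrier_mat n n"
    using Gamma_mat_carrier[of n t] P_mat_carrier[of n] by (simp add: Gamma_hat_def)
  show "v = 0\<^sub>v n" if "v \<in> carrier_vec n" "Gamma_hat n t *\<^sub>v v = 0\<^sub>v n" for v
    using that Gamma_mat_mult_vec_eq_zero_imp[OF assms, of "P_mat n *\<^sub>v v"]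
      P_mat_mult_vec_eq_zero_imp Gamma_mat_carrier[of n t] P_mat_carrier[of n]
    by (simp add: Gamma_hat_def)
qed

lemma Gamma_mat_mult_P_mat_right_inverse:
  assumes B: "B \<in> carrier_mat n n" and right_inverse: "Gamma_hat n t * B = 1\<^sub>m n"
    and v: "v \<in> carrier_vec n"
  shows "Gamma_mat n t *\<^sub>v (P_mat n *\<^sub>v (B *\<^sub>v v)) = v"
proof -
  note carriers = Gamma_mat_carrier[of n t] P_mat_carrier[of n] B v
  have "Gamma_mat n t *\<^sub>v (P_mat n *\<^sub>v (B *\<^sub>v v))
      = (Gamma_mat n t * P_mat n) *\<^sub>v (B *\<^sub>v v)"
    by (rule assoc_mult_mat_vec[symmetric]) (use carriers in auto)
  also have "\<dots> = (Gamma_hat n t * B) *\<^sub>v v"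
    unfolding Gamma_hat_def by (rule assoc_mult_mat_vec[symmetric]) (use carriers in auto)
  finally show ?thesis
    using right_inverse v by simp
qed

lemma psi_hat_scalar_prod:
  assumes "v \<in> carrier_vec n"
  shows "psi_hat n t \<bullet> v = psi_vec n t \<bullet> (P_mat n *\<^sub>v v)"
  unfolding psi_hat_def
  by (rule transpose_vec_mult_scalar[OF P_mat_carrier assms]) (simp add: psi_vec_def)

theorem theoremA3:
  fixes n :: nat and t :: real
  assumes "t \<noteq> 0"
  shows "invertible_mat (Gamma_hat n t) \<and>
    (\<forall>B \<in> carrier_mat n n. Gamma_hat n t * B = 1\<^sub>m n \<and> B * Gamma_hat n t = 1\<^sub>m n \<longrightarrow>
       psi_hat n t \<bullet> (B *\<^sub>v phi_vec n t) = (if even n then 0 else 2))"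
proof (intro conjI ballI impI)
  show "invertible_mat (Gamma_hat n t)"
    using invertible_Gamma_hat[OF assms] .
  fix B assume B: "B \<in> carrier_mat n n"
    and "Gamma_hat n t * B = 1\<^sub>m n \<and> B * Gamma_hat n t = 1\<^sub>m n"
  then have right_inverse: "Gamma_hat n t * B = 1\<^sub>m n"
    by simp
  have phi: "phi_vec n t \<in> carrier_vec n"
    by (simp add: phi_vec_def)
  define y where "y = P_mat n *\<^sub>v (B *\<^sub>v phi_vec n t)"
  have y: "y \<in> carrier_vec n"
    using P_mat_carrier[of n] B phi by (simp add: y_def)
  have "Gamma_mat n t *\<^sub>v y = phi_vec n t"
    unfolding y_def using Gamma_mat_mult_P_mat_right_inverse[OF B right_inverse phi] .
  then have "psi_vec n t \<bullet> y = 1 - (-1) ^ n"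
    using psi_vec_scalar_prod_if_Gamma_mat_mult_eq_phi_vec[OF assms y] by blast
  then show "psi_hat n t \<bullet> (B *\<^sub>v phi_vec n t) = (if even n then 0 else 2)"
    using psi_hat_scalar_prod[of "B *\<^sub>v phi_vec n t"] B phi by (simp add: y_def)
qed

end
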